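(* Let $n_1,\dots,n_r,k$ be integers with $\min\{n_1,\dots,n_r\}>2k>0$, and let $g\in S_{n_1}\times\dots\times S_{n_r}$ be such that for every $1\le i\le r$, all cycles of the projection of $g$ to $S_{n_i}$ have length exceeding $k$. Then the subgroups $S_{n_1-k}\times\dots\times S_{n_r-k}$ and $\langle g\rangle$ invariably generate $S_{n_1}\times\dots\times S_{n_r}$.
   Context: $S_{n_1}\times\dots\times S_{n_r}$ is the group of permutations of $\{1,\dots,n_1+\dots+n_r\}$ preserving each block $B_i=\{n_1+\dots+n_{i-1}+1,\dots,n_1+\dots+n_i\}$, with $S_{n_i}$ the permutations of $B_i$; $S_{n_i-k}\le S_{n_i}$ is the subgroup of permutations of the first $n_i-k$ elements of $B_i$ fixing its last $k$ elements. Subgroups $\{H_i\}_{i\in I}$ of a group $H$ invariably generate $H$ if for every choice of $\{\sigma_i\}_{i\in I}\subseteq H$ the conjugates $\{\sigma_i^{-1}H_i\sigma_i\}$ generate $H$. *)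

theory Defs
  imports "HOL-Algebra.Sym_Groups" "HOL-Algebra.Generated_Groups" "HOL-Combinatorics.Orbits"
begin

text \<open>Blocks are 0-indexed by i < length ns; the ground set is {1..N}, N = sum_list ns.\<close>

definition blk_offset :: "nat list \<Rightarrow> nat \<Rightarrow> nat" where
  "blk_offset ns i = sum_list (take i ns)"

definition blk :: "nat list \<Rightarrow> nat \<Rightarrow> nat set" where
  "blk ns i = {blk_offset ns i + 1 .. blk_offset ns i + ns ! i}"

definition young_carrier :: "nat list \<Rightarrow> (nat \<Rightarrow> nat) set" where
  "young_carrier ns = {p. p permutes {1..sum_list ns} \<and> (\<forall>i < length ns. p ` blk ns i = blk ns i)}"

definition young_group :: "nat list \<Rightarrow> (nat \<Rightarrow> nat) monoid" where
  "young_group ns = (sym_group (sum_list ns)) \<lparr>carrier := young_carrier ns\<rparr>"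

text \<open>The subgroup S_{n_1-k} x ... x S_{n_r-k}: elements fixing the last k points of every block.\<close>
definition young_sub :: "nat list \<Rightarrow> nat \<Rightarrow> (nat \<Rightarrow> nat) set" where
  "young_sub ns k = {p \<in> young_carrier ns.
     \<forall>i < length ns. \<forall>x \<in> {blk_offset ns i + ns ! i - k + 1 .. blk_offset ns i + ns ! i}. p x = x}"

definition invariably_generate :: "('a, 'b) monoid_scheme \<Rightarrow> 'i set \<Rightarrow> ('i \<Rightarrow> 'a set) \<Rightarrow> bool" where
  "invariably_generate G I H \<longleftrightarrow>
     (\<forall>\<sigma>. (\<forall>i \<in> I. \<sigma> i \<in> carrier G) \<longrightarrow>
        generate G (\<Union>i \<in> I. (\<lambda>h. inv\<^bsub>G\<^esub> (\<sigma> i) \<otimes>\<^bsub>G\<^esub> h \<otimes>\<^bsub>G\<^esub> \<sigma> i) ` H i) = carrier G)"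

end

theory Submission
  imports Defs
begin

text \<open>Let H be generated by a conjugate s0\<inverse> Y s0 of Y = S(n1-k) \<times> ... \<times> S(nr-k) and by
  c = s1\<inverse> g s1. It suffices that H contains every transposition inside every block B.
  The points a of B for which s0 a is not among the last k points of B form a set A with
  more than half of the points of B, and all transpositions of A lie in s0\<inverse> Y s0.
  Since every cycle of c is longer than k, which bounds the size of B - A, some power of c moves
  any given point of B into A. Now for a fixed a in A, the points v of B with (a v) in H form a
  class that contains A and is H-invariant, because it meets each of its images under H;
  hence the class is all of B.\<close>

section \<open>Transpositions in subgroups of a symmetric group\<close>

lemma transpose_in_subgroup_sym:
  "transpose u v \<in> H \<Longrightarrow> transpose v u \<in> H"
  by (simp add: transpose_commute)

lemma transpose_in_subgroup_trans:
  assumes H: "subgroup H (sym_group n)"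
    and uv: "transpose u v \<in> H" and vw: "transpose v w \<in> H"
  shows "transpose u w \<in> H"
proof (cases "u = w \<or> v = w")
  case True
  then show ?thesis
    using uv vw subgroup.one_closed[OF H] by (auto simp: sym_group_one)
next
  case False
  then have "transpose u w = transpose u v \<circ> transpose v w \<circ> transpose u v"
    by (simp add: transpose_comp_triple)
  then show ?thesis
    using subgroup.m_closed[OF H subgroup.m_closed[OF H uv vw] uv] by (simp add: sym_group_mult)
qed

lemma comp_transpose_comp_inv:
  assumes "bij f"
  shows "f \<circ> transpose a b \<circ> inv' f = transpose (f a) (f b)"
proof
  fix z
  show "(f \<circ> transpose a b \<circ> inv' f) z = transpose (f a) (f b) z"
    using transpose_apply_commute[OF assms, of "f a" "f b" "inv' f z"] assms
    by (simp add: bij_is_inj bij_is_surj surj_f_inv_f)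
qed

lemma inv_comp_transpose_comp:
  assumes "bij s"
  shows "inv' s \<circ> transpose (s a) (s b) \<circ> s = transpose a b"
  using comp_transpose_comp_inv[OF bij_imp_bij_inv[OF assms], of "s a" "s b"] assms
  by (simp add: inv_inv_eq bij_is_inj)

lemma funpow_in_subgroup:
  assumes H: "subgroup H G" and "mult G = (\<circ>)" and "one G = id" and c: "c \<in> H"
  shows "c ^^ m \<in> H"
proof (induction m)
  case 0
  show ?case using subgroup.one_closed[OF H] assms(3) by (simp only: funpow.simps(1))
next
  case (Suc m)
  show ?case using subgroup.m_closed[OF H c Suc.IH] assms(2) by (simp only: funpow.simps(2))
qed

lemma transpose_in_subgroup_conj:
  assumes H: "subgroup H (sym_group n)" and h: "h \<in> H" and uv: "transpose u v \<in> H"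
  shows "transpose (h u) (h v) \<in> H"
proof -
  have h_carrier: "h \<in> carrier (sym_group n)" using subgroup.mem_carrier[OF H h] .
  then have "inv' h \<in> H"
    using subgroup.m_inv_closed[OF H h] by simp
  then have "h \<circ> transpose u v \<circ> inv' h \<in> H"
    using subgroup.m_closed[OF H subgroup.m_closed[OF H h uv]] by (simp add: sym_group_mult)
  then show ?thesis
    using h_carrier by (simp add: comp_transpose_comp_inv sym_group_carrier permutes_bij)
qed

lemma card_support_transpose_comp_less:
  assumes p: "p permutes S" and S: "finite S" and x: "p x \<noteq> x"
  shows "card {y. (transpose x (p x) \<circ> p) y \<noteq> y} < card {y. p y \<noteq> y}"
proof -
  have support: "{y. (transpose x (p x) \<circ> p) y \<noteq> y} \<subseteq> {y. p y \<noteq> y} - {x}"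
  proof
    fix y
    assume "y \<in> {y. (transpose x (p x) \<circ> p) y \<noteq> y}"
    then have moved: "transpose x (p x) (p y) \<noteq> y" by simp
    then have "y \<noteq> x" by auto
    moreover have "p y \<noteq> y"
    proof
      assume "p y = y"
      moreover have "p y \<noteq> p x"
        using \<open>y \<noteq> x\<close> permutes_inj[OF p] by (metis injD)
      ultimately show False using moved \<open>y \<noteq> x\<close> by simp
    qed
    ultimately show "y \<in> {y. p y \<noteq> y} - {x}" by simp
  qed
  have finite: "finite {y. p y \<noteq> y}"
    using permutes_altdef[THEN iffD1, OF p, THEN conjunct2] S by (rule finite_subset)
  have "card {y. (transpose x (p x) \<circ> p) y \<noteq> y} \<le> card ({y. p y \<noteq> y} - {x})"
    using finite support by (intro card_mono) simp_all
  also have "\<dots> < card {y. p y \<noteq> y}"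
    using finite x by (intro card_Diff1_less) simp_all
  finally show ?thesis .
qed

lemma transpose_in_subgroup_transpose_comp:
  assumes H: "subgroup H (sym_group n)" and "inj p" and p_transpose: "\<And>x. transpose x (p x) \<in> H"
  shows "transpose y ((transpose x (p x) \<circ> p) y) \<in> H"
proof -
  consider "y = x" | "p y = x" | "y \<noteq> x" "p y \<noteq> x"
    by blast
  then show ?thesis
  proof cases
    case 1
    then show ?thesis using subgroup.one_closed[OF H] by (simp add: sym_group_one)
  next
    case 2
    then have "transpose y x \<in> H" using p_transpose[of y] by simp
    then show ?thesis
      using transpose_in_subgroup_trans[OF H _ p_transpose[of x]] 2 by simp
  next
    case 3
    moreover have "p y \<noteq> p x"
      using 3 \<open>inj p\<close> by (metis injD)
    ultimately show ?thesis using p_transpose[of y] by simp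
  qed
qed

lemma permutation_in_subgroup_if_transpositions:
  assumes H: "subgroup H (sym_group n)"
    and "p \<in> carrier (sym_group n)" and "\<And>x. transpose x (p x) \<in> H"
  shows "p \<in> H"
  using assms(2,3)
proof (induction "card {x. p x \<noteq> x}" arbitrary: p rule: less_induct)
  case less
  show ?case
  proof (cases "p = id")
    case True
    then show ?thesis using subgroup.one_closed[OF H] by (simp add: sym_group_one)
  next
    case False
    then obtain x where x: "p x \<noteq> x" by (meson eq_id_iff)
    have p: "p permutes {1..n}" using less.prems(1) by (simp add: sym_group_carrier)
    have x_in: "x \<in> {1..n}"
      using permutes_not_in[OF p] x by blast
    then have px_in: "p x \<in> {1..n}"
      by (rule iffD2[OF permutes_in_image[OF p]])
    define q where "q = transpose x (p x) \<circ> p"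
    have q_carrier: "q \<in> carrier (sym_group n)"
      unfolding q_def sym_group_carrier by (intro permutes_compose p permutes_swap_id x_in px_in)
    have "transpose y (q y) \<in> H" for y
      unfolding q_def using transpose_in_subgroup_transpose_comp[OF H permutes_inj[OF p] less.prems(2)] .
    then have "q \<in> H"
      using less.hyps[OF _ q_carrier] card_support_transpose_comp_less[OF p _ x] by (simp add: q_def)
    then have "transpose x (p x) \<circ> q \<in> H"
      using subgroup.m_closed[OF H less.prems(2)[of x]] by (simp add: sym_group_mult)
    moreover have "transpose x (p x) \<circ> q = p"
      by (simp add: q_def comp_assoc[symmetric])
    ultimately show ?thesis by simp
  qed
qed

text \<open>The class of a meets its image under h, both being more than half of B; a common point
  links every point of the image back to a.\<close>

lemma transposition_class_invariant:
  assumes H: "subgroup H (sym_group n)" and B: "finite B"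
    and h: "h \<in> H" "h ` B \<subseteq> B"
    and large: "card B < 2 * card {v \<in> B. transpose a v \<in> H}"
  shows "h ` {v \<in> B. transpose a v \<in> H} \<subseteq> {v \<in> B. transpose a v \<in> H}"
proof -
  define C where "C = {v \<in> B. transpose a v \<in> H}"
  have C_B: "C \<subseteq> B" and hC_B: "h ` C \<subseteq> B" using h(2) by (auto simp: C_def)
  have fin_C: "finite C" using finite_subset[OF C_B B] .
  have "inj h"
    using subgroup.mem_carrier[OF H h(1)] by (simp add: sym_group_carrier permutes_inj)
  have "C \<inter> h ` C \<noteq> {}"
  proof
    assume disjoint: "C \<inter> h ` C = {}"
    have "card (C \<union> h ` C) = 2 * card C"
      using card_Un_disjoint[OF fin_C _ disjoint] fin_C card_image[OF inj_on_subset[OF \<open>inj h\<close>]]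
      by simp
    moreover have "card (C \<union> h ` C) \<le> card B"
      using card_mono[OF B Un_least[OF C_B hC_B]] .
    ultimately show False using large by (simp add: C_def)
  qed
  then obtain w where w: "w \<in> C" "h w \<in> C" by blast
  have "u \<in> C" if "u \<in> h ` C" for u
  proof -
    obtain v where v: "v \<in> C" and u: "u = h v" using \<open>u \<in> h ` C\<close> by blast
    have aw: "transpose a w \<in> H" and av: "transpose a v \<in> H" and ahw: "transpose a (h w) \<in> H"
      using w v by (simp_all add: C_def)
    have "transpose w v \<in> H"
      using transpose_in_subgroup_trans[OF H transpose_in_subgroup_sym[OF aw] av] .
    then have "transpose (h w) (h v) \<in> H" by (rule transpose_in_subgroup_conj[OF H h(1)])
    then have "transpose a u \<in> H"
      using transpose_in_subgroup_trans[OF H ahw] u by simp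
    moreover have "u \<in> B" using hC_B that by blast
    ultimately show "u \<in> C" by (simp add: C_def)
  qed
  then have "h ` C \<subseteq> C" by blast
  then show ?thesis by (simp only: C_def)
qed

lemma transpose_in_subgroup_from_majority:
  assumes H: "subgroup H (sym_group n)"
    and B: "finite B" "\<And>h. h \<in> H \<Longrightarrow> h ` B \<subseteq> B"
    and A: "A \<subseteq> B" "card B < 2 * card A"
    and A_transpose: "\<And>a b. a \<in> A \<Longrightarrow> b \<in> A \<Longrightarrow> transpose a b \<in> H"
    and reach: "\<And>z. z \<in> B \<Longrightarrow> \<exists>h\<in>H. h z \<in> A"
    and x: "x \<in> B" and y: "y \<in> B"
  shows "transpose x y \<in> H"
proof -
  obtain a where a: "a \<in> A"
    using A(2) by fastforce
  define C where "C = {v \<in> B. transpose a v \<in> H}"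
  have C_B: "C \<subseteq> B" and A_C: "A \<subseteq> C"
    using A(1) A_transpose[OF a] by (auto simp: C_def)
  have large: "card B < 2 * card C"
    using A(2) card_mono[OF finite_subset[OF C_B B(1)] A_C] by linarith
  have "z \<in> C" if z: "z \<in> B" for z
  proof -
    obtain h where h: "h \<in> H" and hz: "h z \<in> A" using reach[OF z] by blast
    have "inj h"
      using subgroup.mem_carrier[OF H h] by (simp add: sym_group_carrier permutes_inj)
    have "h ` C = C"
      using transposition_class_invariant[OF H B(1) h B(2)[OF h] large[unfolded C_def]]
        endo_inj_surj[OF finite_subset[OF C_B B(1)] _ inj_on_subset[OF \<open>inj h\<close>]]
      by (simp add: C_def)
    then obtain c where "c \<in> C" and "h z = h c"
      using A_C hz by blast
    then show "z \<in> C" using injD[OF \<open>inj h\<close>] by metis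
  qed
  then have "transpose a x \<in> H" and "transpose a y \<in> H"
    using x y by (auto simp: C_def)
  then show ?thesis
    using transpose_in_subgroup_trans[OF H transpose_in_subgroup_sym] by blast
qed

section \<open>Orbits\<close>

lemma ex_funpow_in_if_card_Diff_less_card_orbit:
  assumes "finite B" and "\<And>m. (f ^^ m) x \<in> B" and "card (B - A) < card (orbit f x)"
  shows "\<exists>m. (f ^^ m) x \<in> A"
proof (rule ccontr)
  assume "\<nexists>m. (f ^^ m) x \<in> A"
  then have "orbit f x \<subseteq> B - A"
    using assms(2) by (auto simp: orbit_altdef)
  then show False
    using assms(1,3) card_mono[of "B - A" "orbit f x"] by simp
qed

lemma card_orbit_conj:
  assumes "bij s"
  shows "card (orbit (inv' s \<circ> f \<circ> s) x) = card (orbit f (s x))"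
proof -
  have "(inv' s \<circ> f \<circ> s) ^^ m = inv' s \<circ> f ^^ m \<circ> s" for m
    using assms
    by (induction m) (simp_all add: fun_eq_iff bij_is_inj bij_is_surj surj_f_inv_f)
  then have "orbit (inv' s \<circ> f \<circ> s) x = inv' s ` orbit f (s x)"
    by (auto simp: orbit_altdef)
  then show ?thesis
    using card_image[OF inj_on_subset[OF bij_is_inj[OF bij_imp_bij_inv[OF assms]]]] by simp
qed

section \<open>Young subgroups\<close>

lemma young_group_simps [simp]:
  "carrier (young_group ns) = young_carrier ns"
  "mult (young_group ns) = (\<circ>)"
  "one (young_group ns) = id"
  by (simp_all add: young_group_def sym_group_def)

lemma young_carrier_permutes: "p \<in> young_carrier ns \<Longrightarrow> p permutes {1..sum_list ns}"
  by (simp add: young_carrier_def)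

lemma young_carrier_blk: "p \<in> young_carrier ns \<Longrightarrow> i < length ns \<Longrightarrow> x \<in> blk ns i \<Longrightarrow> p x \<in> blk ns i"
  by (auto simp: young_carrier_def)

lemma young_carrier_subgroup: "subgroup (young_carrier ns) (sym_group (sum_list ns))"
proof
  show "young_carrier ns \<subseteq> carrier (sym_group (sum_list ns))"
    by (auto simp: young_carrier_def sym_group_carrier)
  show "\<one>\<^bsub>sym_group (sum_list ns)\<^esub> \<in> young_carrier ns"
    by (simp add: young_carrier_def sym_group_one permutes_id)
next
  fix p q
  assume p: "p \<in> young_carrier ns" and q: "q \<in> young_carrier ns"
  have "(p \<circ> q) ` blk ns i = blk ns i" if "i < length ns" for i
    using p q that unfolding young_carrier_def image_comp[symmetric] by simp
  then show "p \<otimes>\<^bsub>sym_group (sum_list ns)\<^esub> q \<in> young_carrier ns"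
    using p q by (simp add: young_carrier_def sym_group_mult permutes_compose)
next
  fix p
  assume p: "p \<in> young_carrier ns"
  then have perm: "p permutes {1..sum_list ns}" by (rule young_carrier_permutes)
  have "inv' p ` blk ns i = blk ns i" if "i < length ns" for i
  proof -
    have "inv' p ` blk ns i = inv' p ` p ` blk ns i"
      using p that by (simp add: young_carrier_def)
    also have "\<dots> = blk ns i"
      by (rule image_inv_f_f[OF permutes_inj[OF perm]])
    finally show ?thesis .
  qed
  then show "inv\<^bsub>sym_group (sum_list ns)\<^esub> p \<in> young_carrier ns"
    using perm by (simp add: young_carrier_def sym_group_carrier permutes_inv)
qed

lemma group_young_group: "group (young_group ns)"
  unfolding young_group_def
  by (rule subgroup.subgroup_is_group[OF young_carrier_subgroup sym_group_is_group])

lemma subgroup_young_group_imp_subgroup_sym_group: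
  "subgroup H (young_group ns) \<Longrightarrow> subgroup H (sym_group (sum_list ns))"
  unfolding young_group_def by (rule group.incl_subgroup[OF sym_group_is_group young_carrier_subgroup])

lemma young_group_inv [simp]:
  assumes "s \<in> young_carrier ns"
  shows "inv\<^bsub>young_group ns\<^esub> s = inv' s"
  using group.m_inv_consistent[OF sym_group_is_group young_carrier_subgroup assms]
    young_carrier_subgroup[THEN subgroup.mem_carrier, OF assms]
  by (simp add: young_group_def)

lemma young_carrier_conj:
  assumes "s \<in> young_carrier ns" and "h \<in> young_carrier ns"
  shows "inv' s \<circ> h \<circ> s \<in> young_carrier ns"
proof -
  interpret group "young_group ns" by (rule group_young_group)
  show ?thesis
    using m_closed[OF m_closed[OF inv_closed]] assms by simp
qed

lemma blk_offset_Suc: "i < length ns \<Longrightarrow> blk_offset ns (Suc i) = blk_offset ns i + ns ! i"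
  by (simp add: blk_offset_def take_Suc_conv_app_nth)

lemma blk_offset_mono:
  assumes "i \<le> j"
  shows "blk_offset ns i \<le> blk_offset ns j"
proof -
  obtain d where "j = i + d" using le_Suc_ex[OF assms] by blast
  then show ?thesis by (simp add: blk_offset_def take_add)
qed

lemma blk_offset_length: "blk_offset ns (length ns) = sum_list ns"
  by (simp add: blk_offset_def)

lemma card_blk: "card (blk ns i) = ns ! i"
  by (simp add: blk_def)

lemma finite_blk: "finite (blk ns i)"
  by (simp add: blk_def)

lemma blk_disjoint:
  assumes "i < length ns" "j < length ns" "i \<noteq> j"
  shows "blk ns i \<inter> blk ns j = {}"
proof -
  have ordered: "blk ns i \<inter> blk ns j = {}" if "i < j" "j < length ns" for i j
    using blk_offset_mono[of "Suc i" j ns] blk_offset_Suc[of i ns] that by (auto simp: blk_def)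
  show ?thesis
  proof (cases "i < j")
    case True
    then show ?thesis using ordered assms(2) by blast
  next
    case False
    then have "j < i" using assms(3) by simp
    then show ?thesis using ordered[of j i] assms(1) by blast
  qed
qed

lemma blk_subset: "i < length ns \<Longrightarrow> blk ns i \<subseteq> {1..sum_list ns}"
  using blk_offset_mono[of "Suc i" "length ns" ns] blk_offset_Suc[of i ns] blk_offset_length[of ns]
  by (auto simp: blk_def)

lemma ex_blk:
  assumes "x \<in> {1..sum_list ns}"
  shows "\<exists>i<length ns. x \<in> blk ns i"
proof -
  have "\<exists>i<m. x \<in> blk ns i" if "m \<le> length ns" "x \<in> {1..blk_offset ns m}" for m
    using that
  proof (induction m)
    case 0
    then show ?case by (simp add: blk_offset_def)
  next
    case (Suc m)
    then show ?case
      using blk_offset_Suc[of m ns] by (cases "x \<le> blk_offset ns m") (auto simp: blk_def less_Suc_eq)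
  qed
  from this[of "length ns"] show ?thesis
    using assms blk_offset_length[of ns] by simp
qed

lemma transpose_in_young_carrier:
  assumes i: "i < length ns" and ab: "a \<in> blk ns i" "b \<in> blk ns i"
  shows "transpose a b \<in> young_carrier ns"
proof -
  have "transpose a b ` blk ns j = blk ns j" if "j < length ns" for j
  proof (rule transpose_image_eq)
    show "a \<in> blk ns j \<longleftrightarrow> b \<in> blk ns j"
      using ab blk_disjoint[OF i that] by (cases "j = i") auto
  qed
  moreover have "transpose a b permutes {1..sum_list ns}"
    using ab blk_subset[OF i] by (intro permutes_swap_id) auto
  ultimately show ?thesis by (simp add: young_carrier_def)
qed

lemma young_carrier_subset_if_block_transpositions:
  assumes H: "subgroup H (sym_group (sum_list ns))"
    and transpositions: "\<And>i x y. i < length ns \<Longrightarrow> x \<in> blk ns i \<Longrightarrow> y \<in> blk ns i \<Longrightarrow> transpose x y \<in> H"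
  shows "young_carrier ns \<subseteq> H"
proof
  fix p
  assume p: "p \<in> young_carrier ns"
  have "transpose x (p x) \<in> H" for x
  proof (cases "x \<in> {1..sum_list ns}")
    case True
    then obtain i where "i < length ns" "x \<in> blk ns i" using ex_blk by blast
    then show ?thesis using transpositions young_carrier_blk[OF p] by blast
  next
    case False
    then have "p x = x" by (rule permutes_not_in[OF young_carrier_permutes[OF p]])
    then show ?thesis using subgroup.one_closed[OF H] by (simp add: sym_group_one)
  qed
  moreover have "p \<in> carrier (sym_group (sum_list ns))"
    using young_carrier_permutes[OF p] by (simp add: sym_group_carrier)
  ultimately show "p \<in> H"
    using permutation_in_subgroup_if_transpositions[OF H] by blast
qed

definition blk_tail :: "nat list \<Rightarrow> nat \<Rightarrow> nat \<Rightarrow> nat set" where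
  "blk_tail ns k i = {blk_offset ns i + ns ! i - k + 1 .. blk_offset ns i + ns ! i}"

lemma young_sub_iff:
  "p \<in> young_sub ns k \<longleftrightarrow> p \<in> young_carrier ns \<and> (\<forall>i<length ns. \<forall>x\<in>blk_tail ns k i. p x = x)"
  by (simp add: young_sub_def blk_tail_def)

lemma blk_tail_subset: "k \<le> ns ! i \<Longrightarrow> blk_tail ns k i \<subseteq> blk ns i"
  by (auto simp: blk_tail_def blk_def)

lemma card_blk_tail: "k \<le> ns ! i \<Longrightarrow> card (blk_tail ns k i) = k"
  by (simp add: blk_tail_def)

lemma card_preimage_blk_tail_le:
  assumes "inj s" and "k \<le> ns ! i"
  shows "card {a \<in> blk ns i. s a \<in> blk_tail ns k i} \<le> k"
proof -
  have "card {a \<in> blk ns i. s a \<in> blk_tail ns k i} \<le> card (blk_tail ns k i)"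
  proof (rule card_inj_on_le)
    show "inj_on s {a \<in> blk ns i. s a \<in> blk_tail ns k i}"
      using assms(1) by (rule inj_on_subset) simp
  qed (auto simp: blk_tail_def)
  then show ?thesis by (simp add: card_blk_tail[OF assms(2)])
qed

lemma transpose_in_young_sub:
  assumes k: "\<forall>j<length ns. k \<le> ns ! j" and i: "i < length ns"
    and a: "a \<in> blk ns i - blk_tail ns k i" and b: "b \<in> blk ns i - blk_tail ns k i"
  shows "transpose a b \<in> young_sub ns k"
proof -
  have outside: "a \<notin> blk_tail ns k j \<and> b \<notin> blk_tail ns k j" if j: "j < length ns" for j
  proof (cases "j = i")
    case False
    have "blk_tail ns k j \<subseteq> blk ns j"
      using k j by (intro blk_tail_subset) simp
    then show ?thesis
      using a b blk_disjoint[OF i j not_sym[OF False]] by blast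
  qed (use a b in simp)
  have "transpose a b x = x" if "j < length ns" "x \<in> blk_tail ns k j" for j x
    using outside[OF that(1)] that(2) by (intro transpose_apply_other) auto
  moreover have "transpose a b \<in> young_carrier ns"
    using a b by (intro transpose_in_young_carrier[OF i]) auto
  ultimately show ?thesis
    unfolding young_sub_iff by blast
qed

lemma block_transpose_in_subgroup:
  assumes H: "subgroup H (young_group ns)"
    and k: "\<forall>j<length ns. 2 * k < ns ! j"
    and s: "s \<in> young_carrier ns" and conj_sub: "\<And>h. h \<in> young_sub ns k \<Longrightarrow> inv' s \<circ> h \<circ> s \<in> H"
    and c: "c \<in> H" and c_orbits: "\<forall>j<length ns. \<forall>x\<in>blk ns j. k < card (orbit c x)"
    and i: "i < length ns" and x: "x \<in> blk ns i" and y: "y \<in> blk ns i"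
  shows "transpose x y \<in> H"
proof -
  define A where "A = {a \<in> blk ns i. s a \<notin> blk_tail ns k i}"
  have A_blk: "A \<subseteq> blk ns i" by (auto simp: A_def)
  have H_young: "h \<in> young_carrier ns" if "h \<in> H" for h
    using subgroup.mem_carrier[OF H that] by simp
  have s_bij: "bij s" using permutes_bij[OF young_carrier_permutes[OF s]] .
  have "blk ns i - A = {a \<in> blk ns i. s a \<in> blk_tail ns k i}" by (auto simp: A_def)
  moreover have "k \<le> ns ! i" using k i by fastforce
  ultimately have small: "card (blk ns i - A) \<le> k"
    using card_preimage_blk_tail_le[OF bij_is_inj[OF s_bij]] by simp
  have large: "card (blk ns i) < 2 * card A"
    using small card_Diff_subset[OF finite_subset[OF A_blk finite_blk] A_blk]
      card_mono[OF finite_blk A_blk] card_blk[of ns i] k i by auto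
  have powers: "c ^^ m \<in> H" for m
    using funpow_in_subgroup[OF H _ _ c] by simp
  show ?thesis
  proof (rule transpose_in_subgroup_from_majority[OF subgroup_young_group_imp_subgroup_sym_group[OF H]
        finite_blk _ A_blk large _ _ x y])
    show "h ` blk ns i \<subseteq> blk ns i" if "h \<in> H" for h
      using young_carrier_blk[OF H_young[OF that] i] by blast
    show "transpose a b \<in> H" if "a \<in> A" and "b \<in> A" for a b
    proof -
      have "s a \<in> blk ns i - blk_tail ns k i" and "s b \<in> blk ns i - blk_tail ns k i"
        using that young_carrier_blk[OF s i] by (auto simp: A_def)
      then have "transpose (s a) (s b) \<in> young_sub ns k"
        using k by (intro transpose_in_young_sub[OF _ i]) auto
      then have "inv' s \<circ> transpose (s a) (s b) \<circ> s \<in> H" by (rule conj_sub)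
      then show ?thesis by (simp add: inv_comp_transpose_comp[OF s_bij])
    qed
    show "\<exists>h\<in>H. h z \<in> A" if z: "z \<in> blk ns i" for z
    proof -
      have "(c ^^ m) z \<in> blk ns i" for m
        using young_carrier_blk[OF H_young[OF powers] i z] .
      moreover have "card (blk ns i - A) < card (orbit c z)"
        using small c_orbits i z by fastforce
      ultimately obtain m where "(c ^^ m) z \<in> A"
        using ex_funpow_in_if_card_Diff_less_card_orbit[OF finite_blk] by blast
      then show ?thesis using powers by blast
    qed
  qed
qed

lemma generate_young_conjugates:
  assumes k: "\<forall>i<length ns. 2 * k < ns ! i"
    and s0: "s0 \<in> young_carrier ns" and s1: "s1 \<in> young_carrier ns" and g: "g \<in> young_carrier ns"
    and g_orbits: "\<forall>i<length ns. \<forall>x\<in>blk ns i. k < card (orbit g x)"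
  shows "generate (young_group ns) ((\<lambda>h. inv' s0 \<circ> h \<circ> s0) ` young_sub ns k \<union>
           (\<lambda>h. inv' s1 \<circ> h \<circ> s1) ` generate (young_group ns) {g}) = young_carrier ns"
    (is "generate ?G ?S = _")
proof -
  have "generate ?G {g} \<subseteq> young_carrier ns"
    using group.generate_incl[OF group_young_group] g by simp
  then have "?S \<subseteq> carrier ?G"
    using s0 s1 by (auto simp: young_sub_iff young_carrier_conj)
  then have H: "subgroup (generate ?G ?S) ?G"
    by (rule group.generate_is_subgroup[OF group_young_group])
  have S_H: "?S \<subseteq> generate ?G ?S" by (auto intro: generate.incl)
  have conj0: "inv' s0 \<circ> h \<circ> s0 \<in> generate ?G ?S" if "h \<in> young_sub ns k" for h
    using S_H that by blast
  have conj1: "inv' s1 \<circ> g \<circ> s1 \<in> generate ?G ?S"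
    using S_H generate.incl[of g "{g}" ?G] by blast
  have orbits: "\<forall>i<length ns. \<forall>x\<in>blk ns i. k < card (orbit (inv' s1 \<circ> g \<circ> s1) x)"
    using card_orbit_conj[OF permutes_bij[OF young_carrier_permutes[OF s1]]] g_orbits
      young_carrier_blk[OF s1] by simp
  have "young_carrier ns \<subseteq> generate ?G ?S"
    by (rule young_carrier_subset_if_block_transpositions[OF subgroup_young_group_imp_subgroup_sym_group[OF H]
          block_transpose_in_subgroup[OF H k s0 conj0 conj1 orbits]])
  then show ?thesis
    using subgroup.subset[OF H] by auto
qed

theorem corollary3p9:
  fixes ns :: "nat list" and k :: nat and g :: "nat \<Rightarrow> nat"
  assumes "ns \<noteq> []"
    and "k > 0"
    and "\<forall>i < length ns. ns ! i > 2 * k"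
    and "g \<in> carrier (young_group ns)"
    and "\<forall>i < length ns. \<forall>x \<in> blk ns i. card (orbit g x) > k"
  shows "invariably_generate (young_group ns) {0::nat, 1}
           (\<lambda>j. if j = 0 then young_sub ns k else generate (young_group ns) {g})"
  unfolding invariably_generate_def
proof (intro allI impI)
  fix \<sigma> :: "nat \<Rightarrow> nat \<Rightarrow> nat"
  assume "\<forall>j\<in>{0::nat, 1}. \<sigma> j \<in> carrier (young_group ns)"
  then have "\<sigma> 0 \<in> young_carrier ns" and "\<sigma> 1 \<in> young_carrier ns" by simp_all
  then show "generate (young_group ns) (\<Union>j\<in>{0::nat, 1}.
      (\<lambda>h. inv\<^bsub>young_group ns\<^esub> (\<sigma> j) \<otimes>\<^bsub>young_group ns\<^esub> h \<otimes>\<^bsub>young_group ns\<^esub> \<sigma> j) `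
        (if j = 0 then young_sub ns k else generate (young_group ns) {g})) = carrier (young_group ns)"
    using generate_young_conjugates[OF assms(3) _ _ _ assms(5)] assms(4) by simp
qed

end
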